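(* Let $G$ be a digraph and let $\alpha^{(n+1)}>\gamma^{(n)}>\beta^{(n-1)}$ be allowed elementary paths on $G$ (of lengths $n+1,n,n-1$). Write $\alpha=v_0v_1\cdots v_{n+1}$. Then either (a) there exists an allowed elementary $n$-path $\gamma'\neq\gamma$ with $\alpha>\gamma'>\beta$; or (b) $\beta$ is obtained from $\alpha$ by removing two subsequent vertices $v_i\to v_{i+1}$ for some $0\le i\le n$.
   Context: A digraph $G=(V,E)$ consists of a set $V$ and $E\subseteq(V\times V)\setminus\{(v,v)\}$; $(u,v)\in E$ is written $u\to v$. An allowed elementary $n$-path is a sequence $v_0\cdots v_n$ of vertices with $v_{i-1}\to v_i\in E$ for $1\le i\le n$. For allowed elementary paths, $\gamma'<\gamma$ (equivalently $\gamma>\gamma'$) means $\gamma'$ is obtained from $\gamma$ by deleting some of its entries. *)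

theory Defs
  imports Main "HOL-Library.Sublist"
begin

definition digraph :: "'v set \<Rightarrow> ('v \<times> 'v) set \<Rightarrow> bool" where
  "digraph V E \<longleftrightarrow> E \<subseteq> (V \<times> V) - {(v, v) | v. True}"

definition allowed_path :: "'v set \<Rightarrow> ('v \<times> 'v) set \<Rightarrow> nat \<Rightarrow> 'v list \<Rightarrow> bool" where
  "allowed_path V E n p \<longleftrightarrow> length p = Suc n \<and> set p \<subseteq> V \<and>
     (\<forall>i<n. (p ! i, p ! Suc i) \<in> E)"

definition path_less :: "'v list \<Rightarrow> 'v list \<Rightarrow> bool" where
  "path_less q p \<longleftrightarrow> strict_subseq q p"

end

theory Submission
  imports Defs
begin

text \<open>Deleting one vertex of \<alpha> gives \<gamma> and deleting one more gives \<beta>, so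
  \<alpha> = xs u ys w zs and \<beta> = xs ys zs, with \<gamma> either xs ys w zs or xs u ys zs. If ys is empty,
  \<beta> arises by removing the consecutive vertices u w. Otherwise both candidates are allowed,
  since the only edge of either one that is not an edge of \<alpha> (last xs \<rightarrow> hd ys, resp.
  last ys \<rightarrow> hd zs) is an edge of \<beta>; and they differ, since equality would force u = hd ys
  and hence a loop u \<rightarrow> u in \<alpha>.\<close>

lemma subseq_length_Suc_imp_remove:
  assumes "subseq xs ys" "length ys = Suc (length xs)"
  shows "\<exists>us x vs. ys = us @ x # vs \<and> xs = us @ vs"
  using assms
proof (induction ys arbitrary: xs rule: list.induct)
  case Nil
  then show ?case by simp
next
  case (Cons y ys)
  show ?case
  proof (cases "xs \<noteq> [] \<and> hd xs = y")
    case True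
    then obtain xs' where xs: "xs = y # xs'" by (cases xs) auto
    with Cons.prems have "subseq xs' ys" "length ys = Suc (length xs')"
      by auto
    with Cons.IH obtain us x vs where "ys = us @ x # vs" "xs' = us @ vs"
      by blast
    with xs show ?thesis by (metis append_Cons)
  next
    case False
    with Cons.prems(1) have "subseq xs ys" by (cases xs) auto
    with Cons.prems(2) have "xs = ys" by (simp add: subseq_same_length)
    then show ?thesis by (metis append_Nil)
  qed
qed

lemma subseq_chain_length_Suc_obtain:
  assumes "subseq \<gamma> \<alpha>" "length \<alpha> = Suc (length \<gamma>)"
    and "subseq \<beta> \<gamma>" "length \<gamma> = Suc (length \<beta>)"
  obtains xs u ys w zs where "\<alpha> = xs @ u # ys @ w # zs" "\<beta> = xs @ ys @ zs"
    and "\<gamma> = xs @ ys @ w # zs \<or> \<gamma> = xs @ u # ys @ zs"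
proof -
  obtain p1 x p2 where \<alpha>: "\<alpha> = p1 @ x # p2" and \<gamma>: "\<gamma> = p1 @ p2"
    using subseq_length_Suc_imp_remove[OF assms(1,2)] by blast
  obtain q1 y q2 where \<gamma>': "\<gamma> = q1 @ y # q2" and \<beta>: "\<beta> = q1 @ q2"
    using subseq_length_Suc_imp_remove[OF assms(3,4)] by blast
  from \<gamma> \<gamma>' consider "p1 = q1" "p2 = y # q2"
    | us where "p1 = q1 @ y # us" "q2 = us @ p2"
    | us where "q1 = p1 @ us" "p2 = us @ y # q2"
    by (auto simp: append_eq_append_conv2 Cons_eq_append_conv)
  then show thesis
  proof cases
    case 1
    then show thesis using that[of q1 x "[]" y q2] \<alpha> \<beta> \<gamma> by simp
  next
    case (2 us)
    then show thesis using that[of q1 y us x p2] \<alpha> \<beta> \<gamma> by simp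
  next
    case (3 us)
    then show thesis using that[of p1 x us y q2] \<alpha> \<beta> \<gamma> by simp
  qed
qed

lemma strict_subseq_remove: "strict_subseq (xs @ ys) (xs @ u # ys)"
  by (simp add: strict_subseq_def subseq_append' list_emb_Cons)

lemma successively_remove:
  assumes "successively P (xs @ u # ys)"
    and "xs = [] \<or> ys = [] \<or> P (last xs) (hd ys)"
  shows "successively P (xs @ ys)"
  using assms by (auto simp: successively_append_iff successively_Cons)

lemma successively_remove_non_adjacent:
  assumes "successively P (xs @ u # ys @ w # zs)" "successively P (xs @ ys @ zs)" "ys \<noteq> []"
  shows "successively P (xs @ ys @ w # zs)" "successively P (xs @ u # ys @ zs)"
proof -
  show "successively P (xs @ ys @ w # zs)"
  proof (rule successively_remove)
    show "successively P (xs @ u # ys @ w # zs)" by (fact assms(1))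
    show "xs = [] \<or> ys @ w # zs = [] \<or> P (last xs) (hd (ys @ w # zs))"
      using assms(2,3) by (auto simp: successively_append_iff)
  qed
  have "successively P ((xs @ u # ys) @ zs)"
  proof (rule successively_remove)
    show "successively P ((xs @ u # ys) @ w # zs)" using assms(1) by simp
    show "xs @ u # ys = [] \<or> zs = [] \<or> P (last (xs @ u # ys)) (hd zs)"
      using assms(2,3) by (auto simp: successively_append_iff)
  qed
  then show "successively P (xs @ u # ys @ zs)" by simp
qed

lemma remove_non_adjacent_neq:
  assumes "successively P (xs @ u # ys @ w # zs)" "\<not> P u u" "ys \<noteq> []"
  shows "xs @ ys @ w # zs \<noteq> xs @ u # ys @ zs"
proof
  assume "xs @ ys @ w # zs = xs @ u # ys @ zs"
  with \<open>ys \<noteq> []\<close> have "hd ys = u" by (auto simp: neq_Nil_conv)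
  with assms show False by (auto simp: successively_append_iff neq_Nil_conv)
qed

lemma allowed_path_iff_successively:
  "allowed_path V E n p \<longleftrightarrow>
     length p = Suc n \<and> set p \<subseteq> V \<and> successively (\<lambda>x y. (x, y) \<in> E) p"
  by (auto simp: allowed_path_def successively_conv_nth)

lemma allowed_path_remove_non_adjacent:
  assumes "allowed_path V E (Suc n) (xs @ u # ys @ w # zs)" "allowed_path V E m (xs @ ys @ zs)"
    and "ys \<noteq> []"
  shows "allowed_path V E n (xs @ ys @ w # zs)" "allowed_path V E n (xs @ u # ys @ zs)"
  using assms successively_remove_non_adjacent[of "\<lambda>x y. (x, y) \<in> E" xs u ys w zs]
  by (auto simp: allowed_path_iff_successively)

theorem proposition2p3:
  fixes V :: "'v set" and E :: "('v \<times> 'v) set" and n :: nat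
    and \<alpha> \<gamma> \<beta> :: "'v list"
  assumes "digraph V E"
    and "n \<ge> 1"
    and "allowed_path V E (n + 1) \<alpha>"
    and "allowed_path V E n \<gamma>"
    and "allowed_path V E (n - 1) \<beta>"
    and "path_less \<gamma> \<alpha>"
    and "path_less \<beta> \<gamma>"
  shows "(\<exists>\<gamma>'. allowed_path V E n \<gamma>' \<and> \<gamma>' \<noteq> \<gamma> \<and> path_less \<gamma>' \<alpha> \<and> path_less \<beta> \<gamma>')
      \<or> (\<exists>i\<le>n. \<beta> = take i \<alpha> @ drop (i + 2) \<alpha>)"
proof -
  have len: "length \<alpha> = n + 2" "length \<gamma> = n + 1" "length \<beta> = n"
    using assms(2-5) by (auto simp: allowed_path_def)
  have "subseq \<gamma> \<alpha>" "length \<alpha> = Suc (length \<gamma>)" "subseq \<beta> \<gamma>" "length \<gamma> = Suc (length \<beta>)"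
    using assms(6,7) len by (auto simp: path_less_def strict_subseq_def)
  then obtain xs u ys w zs where \<alpha>: "\<alpha> = xs @ u # ys @ w # zs" and \<beta>: "\<beta> = xs @ ys @ zs"
    and \<gamma>: "\<gamma> = xs @ ys @ w # zs \<or> \<gamma> = xs @ u # ys @ zs"
    by (rule subseq_chain_length_Suc_obtain)
  show ?thesis
  proof (cases "ys = []")
    case True
    with \<alpha> \<beta> len(1) show ?thesis
      by (intro disjI2 exI[of _ "length xs"]) simp
  next
    case False
    define \<gamma>\<^sub>u \<gamma>\<^sub>w where "\<gamma>\<^sub>u = xs @ ys @ w # zs" and "\<gamma>\<^sub>w = xs @ u # ys @ zs"
    have allowed: "allowed_path V E n \<gamma>\<^sub>u" "allowed_path V E n \<gamma>\<^sub>w"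
      using allowed_path_remove_non_adjacent[of V E n xs u ys w zs] assms(3,5) False
      by (simp_all add: \<alpha> \<beta> \<gamma>\<^sub>u_def \<gamma>\<^sub>w_def)
    have "\<gamma>\<^sub>u \<noteq> \<gamma>\<^sub>w"
      unfolding \<gamma>\<^sub>u_def \<gamma>\<^sub>w_def
    proof (rule remove_non_adjacent_neq)
      show "successively (\<lambda>x y. (x, y) \<in> E) (xs @ u # ys @ w # zs)"
        using assms(3) \<alpha> by (simp add: allowed_path_iff_successively)
      show "(u, u) \<notin> E" using assms(1) by (auto simp: digraph_def)
    qed fact
    moreover have "path_less \<gamma>\<^sub>u \<alpha>" "path_less \<beta> \<gamma>\<^sub>u" "path_less \<gamma>\<^sub>w \<alpha>" "path_less \<beta> \<gamma>\<^sub>w"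
      using strict_subseq_remove[of xs] strict_subseq_remove[of "xs @ ys"]
        strict_subseq_remove[of "xs @ u # ys"]
      by (simp_all add: path_less_def \<alpha> \<beta> \<gamma>\<^sub>u_def \<gamma>\<^sub>w_def)
    ultimately show ?thesis
      using allowed \<gamma> by (auto simp: \<gamma>\<^sub>u_def \<gamma>\<^sub>w_def)
  qed
qed

end
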